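(* Consider a Pandora's box problem with sequential inspection with $N$ boxes partitioned into $K$ classes, class $k\in[K]$ containing $N_k$ boxes that are identically distributed (same joint distribution of $(V,T)$ and same costs). Suppose there exists $\theta>0$ such that $N_k>\theta N$ for all $k\in[K]$. Let $i\in[K]$ be the class of boxes that initially attains the largest opening threshold $\sigma_M=\max_{j}\max\{\sigma_j^F,\sigma_j^P\}$ (all boxes closed), and let $u=\Pr[V_i>\sigma_i^F]$, $q=\Pr[\sigma_i^{F\mid T_i}>\sigma_i^P]$ and $p=\Pr[V_i>\sigma_i^P\mid \sigma_i^{F\mid T_i}>\sigma_i^P]$ for a box of class $i$. Then: (1) If $\sigma_i^F=\sigma_M$, the policy that always F-opens closed boxes of class $i$ and applies the stopping rule (stop as soon as the best prize found so far is at least every remaining opening threshold) has expected profit at least $(1-(1-u)^{\theta N})$ times the optimal expected profit. (2) If $\sigma_i^P=\sigma_M$, the policy that always P-opens closed boxes of class $i$, F-opens a partially opened box when its revealed type $t$ satisfies $\sigma_i^{F\mid t}>\sigma_i^P$, and applies the same stopping rule has expected profit at least $(1-(1-pq)^{\theta N})$ times the optimal expected profit.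
   Context: Pandora's box problem with sequential inspection: each box $j$ has a type $T_j$ in a finite set and a nonnegative prize $V_j$ with known joint distribution; boxes are independent. A closed box can be F-opened at cost $c_j^F$ (revealing $V_j$) or P-opened at cost $c_j^P$ (revealing $T_j$); a partially opened box can later be F-opened at cost $c_j^F$. The decision maker may stop at any time and collect the largest prize among F-opened boxes; the objective is expected collected prize minus total inspection costs. Thresholds: $\sigma_j^F$ solves $\mathbb{E}[(V_j-\sigma)^+]=c_j^F$; $\sigma_j^{F\mid t}$ solves $\mathbb{E}[(V_j-\sigma)^+\mid T_j=t]=c_j^F$; $\sigma_j^P$ solves $\mathbb{E}\big[\max\{0,-c_j^F+\mathbb{E}[(V_j-\sigma)^+\mid T_j]\}\big]=c_j^P$. The opening thresholds of a closed box are $\sigma_j^F,\sigma_j^P$ and of a partially opened box with revealed type $t_j$ is $\sigma_j^{F\mid t_j}$. "A factor $\alpha$-close to the optimum" means expected profit at least $\alpha$ times the optimal expected profit. *)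

theory Defs
  imports "HOL-Probability.Probability"
begin

text \<open>Box j < N has a joint law D j of
(T_j, V_j) on a finite type set 't (first component = type, second = prize). Boxes are independent: the outcome of a box
is drawn from its own law when it is inspected.\<close>

datatype 't bstate = Closed | Part 't | Full real
datatype act = FOpen | POpen

definition cond_exp :: "('t \<times> real) measure \<Rightarrow> 't \<Rightarrow> (real \<Rightarrow> real) \<Rightarrow> real" where
  "cond_exp M t g = (\<integral>x. indicator {t} (fst x) * g (snd x) \<partial>M) / measure M ({t} \<times> UNIV)"

definition sigF :: "('t \<times> real) measure \<Rightarrow> real \<Rightarrow> real" where
  "sigF M c = (THE \<sigma>. (\<integral>x. max 0 (snd x - \<sigma>) \<partial>M) = c)"

definition sigFc :: "('t \<times> real) measure \<Rightarrow> real \<Rightarrow> 't \<Rightarrow> real" where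
  "sigFc M c t = (THE \<sigma>. cond_exp M t (\<lambda>v. max 0 (v - \<sigma>)) = c)"

definition sigP :: "('t \<times> real) measure \<Rightarrow> real \<Rightarrow> real \<Rightarrow> real" where
  "sigP M cf cp = (THE \<sigma>. (\<integral>x. max 0 (- cf + cond_exp M (fst x) (\<lambda>v. max 0 (v - \<sigma>))) \<partial>M) = cp)"

definition best :: "nat \<Rightarrow> (nat \<Rightarrow> 't bstate) \<Rightarrow> real" where
  "best N s = Max (insert 0 {v. \<exists>j<N. s j = Full v})"

text \<open>Optimal value (Bellman recursion with fuel; fuel 2N suffices from the
initial state since every box admits at most two inspections).\<close>
primrec optf :: "nat \<Rightarrow> (nat \<Rightarrow> ('t \<times> real) measure) \<Rightarrow> (nat \<Rightarrow> real) \<Rightarrow> (nat \<Rightarrow> real)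
    \<Rightarrow> nat \<Rightarrow> (nat \<Rightarrow> 't bstate) \<Rightarrow> real" where
  "optf N D cF cP 0 s = best N s"
| "optf N D cF cP (Suc n) s = Max (insert (best N s) (\<Union>j\<in>{..<N}. (case s j of
      Closed \<Rightarrow> {- cF j + (\<integral>x. optf N D cF cP n (s(j := Full (snd x))) \<partial>D j),
                 - cP j + (\<integral>x. optf N D cF cP n (s(j := Part (fst x))) \<partial>D j)}
    | Part t \<Rightarrow> {- cF j + cond_exp (D j) t (\<lambda>v. optf N D cF cP n (s(j := Full v)))}
    | Full v \<Rightarrow> {})))"

definition opt_value :: "nat \<Rightarrow> (nat \<Rightarrow> ('t \<times> real) measure) \<Rightarrow> (nat \<Rightarrow> real) \<Rightarrow> (nat \<Rightarrow> real) \<Rightarrow> real" where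
  "opt_value N D cF cP = optf N D cF cP (2 * N) (\<lambda>_. Closed)"

primrec polf :: "nat \<Rightarrow> (nat \<Rightarrow> ('t \<times> real) measure) \<Rightarrow> (nat \<Rightarrow> real) \<Rightarrow> (nat \<Rightarrow> real)
    \<Rightarrow> ((nat \<Rightarrow> 't bstate) \<Rightarrow> (nat \<times> act) option) \<Rightarrow> nat \<Rightarrow> (nat \<Rightarrow> 't bstate) \<Rightarrow> real" where
  "polf N D cF cP \<pi> 0 s = best N s"
| "polf N D cF cP \<pi> (Suc n) s = (case \<pi> s of
      None \<Rightarrow> best N s
    | Some (j, a) \<Rightarrow> (if j < N then (case (a, s j) of
          (FOpen, Closed) \<Rightarrow> - cF j + (\<integral>x. polf N D cF cP \<pi> n (s(j := Full (snd x))) \<partial>D j)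
        | (POpen, Closed) \<Rightarrow> - cP j + (\<integral>x. polf N D cF cP \<pi> n (s(j := Part (fst x))) \<partial>D j)
        | (FOpen, Part t) \<Rightarrow> - cF j + cond_exp (D j) t (\<lambda>v. polf N D cF cP \<pi> n (s(j := Full v)))
        | _ \<Rightarrow> best N s) else best N s))"

definition pol_value where
  "pol_value N D cF cP \<pi> = polf N D cF cP \<pi> (2 * N) (\<lambda>_. Closed)"

definition stop_rule :: "nat \<Rightarrow> (nat \<Rightarrow> ('t \<times> real) measure) \<Rightarrow> (nat \<Rightarrow> real) \<Rightarrow> (nat \<Rightarrow> real)
    \<Rightarrow> (nat \<Rightarrow> 't bstate) \<Rightarrow> bool" where
  "stop_rule N D cF cP s = (\<forall>j<N. (case s j of
      Closed \<Rightarrow> sigF (D j) (cF j) \<le> best N s \<and> sigP (D j) (cF j) (cP j) \<le> best N s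
    | Part t \<Rightarrow> sigFc (D j) (cF j) t \<le> best N s
    | Full v \<Rightarrow> True))"

definition polF :: "nat \<Rightarrow> (nat \<Rightarrow> ('t \<times> real) measure) \<Rightarrow> (nat \<Rightarrow> real) \<Rightarrow> (nat \<Rightarrow> real)
    \<Rightarrow> (nat \<Rightarrow> nat) \<Rightarrow> nat \<Rightarrow> (nat \<Rightarrow> 't bstate) \<Rightarrow> (nat \<times> act) option" where
  "polF N D cF cP cls i s = (if stop_rule N D cF cP s then None else
     (case find (\<lambda>j. cls j = i \<and> s j = Closed) [0..<N] of
        None \<Rightarrow> None | Some j \<Rightarrow> Some (j, FOpen)))"

definition polP :: "nat \<Rightarrow> (nat \<Rightarrow> ('t \<times> real) measure) \<Rightarrow> (nat \<Rightarrow> real) \<Rightarrow> (nat \<Rightarrow> real)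
    \<Rightarrow> (nat \<Rightarrow> nat) \<Rightarrow> nat \<Rightarrow> (nat \<Rightarrow> 't bstate) \<Rightarrow> (nat \<times> act) option" where
  "polP N D cF cP cls i s = (if stop_rule N D cF cP s then None else
     (case find (\<lambda>j. cls j = i \<and> (\<exists>t. s j = Part t \<and> sigFc (D j) (cF j) t > sigP (D j) (cF j) (cP j))) [0..<N] of
        Some j \<Rightarrow> Some (j, FOpen)
      | None \<Rightarrow> (case find (\<lambda>j. cls j = i \<and> s j = Closed) [0..<N] of
          None \<Rightarrow> None | Some j \<Rightarrow> Some (j, POpen))))"

end

theory Submission
  imports Defs
begin

text \<open>
  From above: as long as the best prize found is at most X and both
  opening thresholds of every closed box are at most X, no policy earns more than X plus the surplus
  max 0 (E[max 0 (V - X) | T = t] - c_F) still offered by the partially opened boxes, because every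
  inspection costs at least what it can add above X (this is what the threshold equations say).
  Starting with all boxes closed, OPT \<le> max 0 \<sigma>_M.

  From below: under either policy a box of class i is opened at exactly its fair price at level
  \<sigma>_M, and it produces a prize above \<sigma>_M with probability u (resp. p q). By induction on the
  number m of closed boxes of class i, starting from the best prize b < \<sigma>_M the policy earns at
  least b + (\<sigma>_M - b) (1 - (1 - u)^m). Since class i has more than \<theta> N boxes, the bound follows.
\<close>

section \<open>Opening thresholds\<close>

lemma unique_root_of_continuous_decreasing:
  fixes f :: "real \<Rightarrow> real"
  assumes cont: "continuous_on UNIV f"
    and decr: "\<And>x y. x < y \<Longrightarrow> 0 < f y \<Longrightarrow> f y < f x"
    and c: "0 < c" and a: "c \<le> f a" and b: "f b \<le> c"
  shows "\<exists>!s. f s = c"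
proof (rule ex_ex1I)
  show "\<exists>s. f s = c"
  proof (cases "a \<le> b")
    case True
    then show ?thesis
      using IVT2[OF b a True] cont by (auto simp: continuous_on_eq_continuous_at)
  next
    case False
    then have "f a < f b" using decr[of b a] a c by linarith
    then show ?thesis using a b by linarith
  qed
next
  fix x y assume "f x = c" "f y = c"
  then show "x = y" using decr[of x y] decr[of y x] c by (cases x y rule: linorder_cases) auto
qed

locale box_law = prob_space M for M :: "('t::finite \<times> real) measure" +
  assumes sets_eq: "sets M = sets (count_space UNIV \<Otimes>\<^sub>M borel)"
    and integrable_snd: "integrable M snd"
begin

lemma space_eq: "space M = UNIV"
  using sets_eq_imp_space_eq[OF sets_eq] by (simp add: space_pair_measure)

lemma measurable_fst_count [measurable]: "fst \<in> M \<rightarrow>\<^sub>M count_space UNIV"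
  using measurable_fst[of "count_space UNIV" "borel :: real measure"]
  by (simp add: measurable_cong_sets[OF sets_eq refl])

lemma measurable_snd_borel [measurable]: "snd \<in> borel_measurable M"
  using measurable_snd[of "count_space UNIV" "borel :: real measure"]
  by (simp add: measurable_cong_sets[OF sets_eq refl])

lemma integrable_linear_growth:
  assumes "h \<in> borel_measurable M" and "\<And>x. \<bar>h x\<bar> \<le> a + b * \<bar>snd x\<bar>"
  shows "integrable M h"
proof (rule Bochner_Integration.integrable_bound)
  show "integrable M (\<lambda>x. a + b * \<bar>snd x\<bar>)"
    using integrable_snd by (intro Bochner_Integration.integrable_add integrable_mult_right integrable_abs) simp
  show "AE x in M. norm (h x) \<le> norm (a + b * \<bar>snd x\<bar>)"
    using assms(2) by (intro AE_I2) (smt (verit) real_norm_def)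
qed fact

definition type_prob :: "'t \<Rightarrow> real" where
  "type_prob t = measure M ({t} \<times> UNIV)"

lemma type_prob_nonneg: "0 \<le> type_prob t"
  by (simp add: type_prob_def)

lemma integral_indicator_fst: "(\<integral>x. indicator A (fst x) \<partial>M) = measure M (A \<times> UNIV)"
proof -
  have "(\<integral>x. indicator A (fst x) \<partial>M) = (\<integral>x. indicator (A \<times> UNIV) x \<partial>M :: real)"
    by (intro Bochner_Integration.integral_cong) (auto simp: indicator_def)
  then show ?thesis
    by (simp add: space_eq)
qed

lemma integral_indicator_type: "(\<integral>x. indicator {t} (fst x) \<partial>M) = type_prob t"
  by (simp add: integral_indicator_fst type_prob_def)

lemma integrable_indicator_type_mult:
  fixes f :: "'t \<times> real \<Rightarrow> real"
  assumes f: "integrable M f"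
  shows "integrable M (\<lambda>x. indicator {t} (fst x) * f x)"
proof (rule Bochner_Integration.integrable_bound[of M f, OF f])
  show "(\<lambda>x. indicator {t} (fst x) * f x) \<in> borel_measurable M"
    using borel_measurable_integrable[OF f] by measurable
qed (auto simp: indicator_def)

lemma integral_split_types:
  fixes f :: "'t \<times> real \<Rightarrow> real"
  assumes f: "integrable M f"
  shows "(\<integral>x. f x \<partial>M) = (\<Sum>t\<in>UNIV. \<integral>x. indicator {t} (fst x) * f x \<partial>M)"
proof -
  have "(\<Sum>t\<in>UNIV. indicator {t} (fst x) * f x) = f x" for x :: "'t \<times> real"
    by (simp add: indicator_def of_bool_def sum.delta' flip: sum_distrib_right)
  then have "(\<integral>x. f x \<partial>M) = (\<integral>x. (\<Sum>t\<in>UNIV. indicator {t} (fst x) * f x) \<partial>M)"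
    by simp
  also have "\<dots> = (\<Sum>t\<in>UNIV. \<integral>x. indicator {t} (fst x) * f x \<partial>M)"
    using integrable_indicator_type_mult[OF f] by (rule Bochner_Integration.integral_sum)
  finally show ?thesis .
qed

lemma integral_fun_fst:
  fixes g :: "'t \<Rightarrow> real"
  shows "integrable M (\<lambda>x. g (fst x))" and "(\<integral>x. g (fst x) \<partial>M) = (\<Sum>t\<in>UNIV. g t * type_prob t)"
proof -
  have "\<bar>g (fst x)\<bar> \<le> (\<Sum>t\<in>UNIV. \<bar>g t\<bar>)" for x :: "'t \<times> real"
    by (rule member_le_sum) simp_all
  then show int: "integrable M (\<lambda>x. g (fst x))"
    by (intro integrable_linear_growth[where a = "\<Sum>t\<in>UNIV. \<bar>g t\<bar>" and b = 0]) simp_all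
  have "(\<integral>x. indicator {t} (fst x) * g (fst x) \<partial>M) = g t * type_prob t" for t
  proof -
    have "(\<integral>x. indicator {t} (fst x) * g (fst x) \<partial>M) = (\<integral>x. g t * indicator {t} (fst x) \<partial>M)"
      by (intro Bochner_Integration.integral_cong) (auto simp: indicator_def)
    then show ?thesis
      by (simp add: integral_indicator_type)
  qed
  then show "(\<integral>x. g (fst x) \<partial>M) = (\<Sum>t\<in>UNIV. g t * type_prob t)"
    by (simp add: integral_split_types[OF int])
qed

lemma sum_type_prob: "(\<Sum>t\<in>UNIV. type_prob t) = 1"
  using integral_fun_fst(2)[of "\<lambda>_. 1"] by (simp add: prob_space)

lemma integral_indicator_type_null:
  fixes h :: "'t \<times> real \<Rightarrow> real"
  assumes "type_prob t = 0"
  shows "(\<integral>x. indicator {t} (fst x) * h x \<partial>M) = 0"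
proof (rule integral_eq_zero_AE)
  have "{t} \<times> UNIV \<in> null_sets M"
    using assms by (simp add: null_sets_def sets_eq pair_measureI type_prob_def emeasure_eq_measure)
  from AE_not_in[OF this] show "AE x in M. indicator {t} (fst x) * h x = 0"
    by eventually_elim (simp add: mem_Times_iff split: split_indicator)
qed

lemma type_prob_mult_cond_exp:
  "type_prob t * cond_exp M t g = (\<integral>x. indicator {t} (fst x) * g (snd x) \<partial>M)"
  by (cases "type_prob t = 0")
     (auto simp: cond_exp_def type_prob_def[symmetric] integral_indicator_type_null)

lemma integral_cond_exp:
  assumes "integrable M (\<lambda>x. g (snd x))"
  shows "(\<integral>x. cond_exp M (fst x) g \<partial>M) = (\<integral>x. g (snd x) \<partial>M)"
proof -
  have "(\<integral>x. cond_exp M (fst x) g \<partial>M) = (\<Sum>t\<in>UNIV. type_prob t * cond_exp M t g)"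
    using integral_fun_fst(2)[of "\<lambda>t. cond_exp M t g"] by (simp add: mult.commute)
  then show ?thesis
    by (simp add: integral_split_types[OF assms] type_prob_mult_cond_exp)
qed

definition excess :: "'t set \<Rightarrow> real \<Rightarrow> real" where
  "excess A s = (\<integral>x. indicator A (fst x) * max 0 (snd x - s) \<partial>M)"

lemma integrable_excess: "integrable M (\<lambda>x. indicator A (fst x) * max 0 (snd x - s))"
  by (rule integrable_linear_growth[where a = "\<bar>s\<bar>" and b = 1]) (auto simp: indicator_def)

lemma excess_nonneg: "0 \<le> excess A s"
  unfolding excess_def by (intro integral_nonneg_AE AE_I2) simp

lemma excess_antimono: "x \<le> y \<Longrightarrow> excess A y \<le> excess A x"
  unfolding excess_def
  by (intro integral_mono integrable_excess mult_left_mono) auto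

lemma excess_le_shift:
  assumes "x \<le> y"
  shows "excess A x \<le> excess A y + (y - x)"
proof -
  have "excess A x \<le> (\<integral>z. indicator A (fst z) * max 0 (snd z - y) + (y - x) \<partial>M)"
    unfolding excess_def using assms
    by (intro integral_mono integrable_excess Bochner_Integration.integrable_add)
       (auto simp: indicator_def)
  also have "\<dots> = excess A y + (y - x)"
    unfolding excess_def using integrable_excess by (simp add: prob_space)
  finally show ?thesis .
qed

lemma continuous_on_excess: "continuous_on S (excess A)"
proof -
  have "dist (excess A x) (excess A y) \<le> 1 * dist x y" for x y
    using excess_antimono excess_le_shift
    by (cases x y rule: linorder_le_cases) (smt (verit) dist_real_def)+
  then have "1-lipschitz_on S (excess A)"
    by (intro lipschitz_onI) simp_all
  then show ?thesis
    by (rule lipschitz_on_continuous_on)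
qed

lemma excess_strict_antimono:
  assumes xy: "x < y" and pos: "0 < excess A y"
  shows "excess A y < excess A x"
proof -
  define P :: real where "P = (\<integral>z. indicator A (fst z) * indicator {y<..} (snd z) \<partial>M)"
  have intP: "integrable M (\<lambda>z. indicator A (fst z) * indicator {y<..} (snd z) :: real)"
    by (rule integrable_linear_growth[where a = 1 and b = 0]) (auto simp: indicator_def)
  have "excess A y + (y - x) * P
      = (\<integral>z. indicator A (fst z) * max 0 (snd z - y)
               + (y - x) * (indicator A (fst z) * indicator {y<..} (snd z)) \<partial>M)"
    unfolding excess_def P_def using integrable_excess intP by simp
  also have "\<dots> \<le> excess A x"
    unfolding excess_def using xy
    by (intro integral_mono integrable_excess Bochner_Integration.integrable_add
          integrable_mult_right intP) (auto simp: indicator_def)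
  finally have le: "excess A y + (y - x) * P \<le> excess A x" .
  have "P \<noteq> 0"
  proof
    assume "P = 0"
    then have "AE z in M. indicator A (fst z) * indicator {y<..} (snd z) = (0 :: real)"
      using integral_nonneg_eq_0_iff_AE[OF intP] unfolding P_def by (auto intro: AE_I2)
    then have "AE z in M. indicator A (fst z) * max 0 (snd z - y) = (0 :: real)"
      by eventually_elim (auto simp: indicator_def split: if_splits)
    then have "excess A y = 0"
      unfolding excess_def by (rule integral_eq_zero_AE)
    then show False using pos by simp
  qed
  moreover have "0 \<le> P"
    unfolding P_def by (intro integral_nonneg_AE AE_I2) simp
  ultimately show ?thesis
    using le xy by (smt (verit) mult_pos_pos)
qed

lemma excess_tendsto_0: "(\<lambda>n. excess A (real n)) \<longlonglongrightarrow> 0"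
proof -
  have "(\<lambda>n. excess A (real n)) \<longlonglongrightarrow> (\<integral>x. 0 \<partial>M)"
    unfolding excess_def
  proof (rule integral_dominated_convergence[where w = "\<lambda>x. \<bar>snd x\<bar>"])
    show "AE x in M. (\<lambda>n. indicator A (fst x) * max 0 (snd x - real n)) \<longlonglongrightarrow> 0"
    proof (intro AE_I2 tendsto_eventually)
      fix x :: "'t \<times> real"
      obtain k :: nat where "snd x \<le> real k"
        using real_arch_simple by blast
      then show "\<forall>\<^sub>F n in sequentially. indicator A (fst x) * max 0 (snd x - real n) = 0"
        unfolding eventually_sequentially by (intro exI[of _ k]) auto
    qed
  qed (use integrable_snd in \<open>auto simp: indicator_def\<close>)
  then show ?thesis
    by simp
qed

lemma excess_unbounded:
  assumes pos: "0 < measure M (A \<times> UNIV)"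
  shows "\<exists>s. c < excess A s"
proof -
  define P where "P = measure M (A \<times> UNIV)"
  define B where "B = (\<integral>x. indicator A (fst x) * snd x \<partial>M)"
  have intB: "integrable M (\<lambda>x. indicator A (fst x) * snd x :: real)"
    by (rule integrable_linear_growth[where a = 0 and b = 1]) (auto simp: indicator_def)
  define s where "s = - (\<bar>c\<bar> + \<bar>B\<bar> + 1) / P"
  have "B - s * P = (\<integral>x. indicator A (fst x) * snd x - s * indicator A (fst x) \<partial>M)"
    unfolding B_def P_def using intB integral_fun_fst(1)
    by (simp add: integral_indicator_fst)
  also have "\<dots> \<le> excess A s"
    unfolding excess_def
    by (intro integral_mono integrable_excess Bochner_Integration.integrable_diff intB
          integrable_mult_right integral_fun_fst(1)) (auto simp: indicator_def)
  finally have "B - s * P \<le> excess A s" .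
  moreover have "s * P = - (\<bar>c\<bar> + \<bar>B\<bar> + 1)"
    using pos unfolding s_def P_def by simp
  ultimately show ?thesis
    by (intro exI[of _ s]) linarith
qed

lemma excess_root:
  assumes "0 < c" and "0 < measure M (A \<times> UNIV)"
  shows "\<exists>!s. excess A s = c"
proof -
  obtain a where "c < excess A a"
    using excess_unbounded[OF assms(2)] by blast
  moreover obtain n where "excess A (real n) < c"
    using order_tendstoD(2)[OF excess_tendsto_0 \<open>0 < c\<close>] by (auto simp: eventually_sequentially)
  ultimately show ?thesis
    by (intro unique_root_of_continuous_decreasing[OF continuous_on_excess excess_strict_antimono
          \<open>0 < c\<close>, where a = a and b = "real n"]) simp_all
qed

lemma excess_UNIV: "excess UNIV s = (\<integral>x. max 0 (snd x - s) \<partial>M)"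
  by (simp add: excess_def)

lemma cond_exp_excess: "cond_exp M t (\<lambda>v. max 0 (v - s)) = excess {t} s / type_prob t"
  by (simp add: cond_exp_def excess_def type_prob_def)

lemma cond_exp_excess_antimono:
  "x \<le> y \<Longrightarrow> cond_exp M t (\<lambda>v. max 0 (v - y)) \<le> cond_exp M t (\<lambda>v. max 0 (v - x))"
  unfolding cond_exp_excess by (intro divide_right_mono excess_antimono type_prob_nonneg)

lemma cond_exp_excess_nonneg: "0 \<le> cond_exp M t (\<lambda>v. max 0 (v - s))"
  unfolding cond_exp_excess by (intro divide_nonneg_nonneg excess_nonneg type_prob_nonneg)

lemma cond_exp_le_const_plus_excess:
  assumes bound: "\<And>v. g v \<le> a + max 0 (v - X)" and a: "0 \<le> a"
  shows "cond_exp M t g \<le> a + cond_exp M t (\<lambda>v. max 0 (v - X))"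
proof (cases "0 < type_prob t \<and> integrable M (\<lambda>x. indicator {t} (fst x) * g (snd x))")
  case True
  have "type_prob t * cond_exp M t g = (\<integral>x. indicator {t} (fst x) * g (snd x) \<partial>M)"
    by (rule type_prob_mult_cond_exp)
  also have "\<dots> \<le> (\<integral>x. a * indicator {t} (fst x) + indicator {t} (fst x) * max 0 (snd x - X) \<partial>M)"
    using True bound integrable_excess[of "{t}" X] integral_fun_fst(1)[of "indicator {t}"]
    by (intro integral_mono) (auto simp: indicator_def)
  also have "\<dots> = type_prob t * (a + cond_exp M t (\<lambda>v. max 0 (v - X)))"
    using integrable_excess[of "{t}" X] integral_fun_fst(1)[of "indicator {t}"]
      type_prob_mult_cond_exp[of t "\<lambda>v. max 0 (v - X)"]
    by (simp add: integral_indicator_type algebra_simps)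
  finally show ?thesis
    using True by simp
next
  case False
  have "cond_exp M t g = 0"
  proof (cases "type_prob t = 0")
    case True
    then show ?thesis by (simp add: cond_exp_def type_prob_def)
  next
    case False
    then have "\<not> integrable M (\<lambda>x. indicator {t} (fst x) * g (snd x))"
      using \<open>\<not> (0 < type_prob t \<and> _)\<close> type_prob_nonneg[of t] by simp
    then show ?thesis by (simp add: cond_exp_def not_integrable_integral_eq)
  qed
  then show ?thesis
    using a cond_exp_excess_nonneg[of t X] by simp
qed

lemma excess_type_null: "type_prob t = 0 \<Longrightarrow> excess {t} s = 0"
  unfolding excess_def by (rule integral_indicator_type_null)

lemma sum_excess_types: "(\<Sum>t\<in>UNIV. excess {t} s) = excess UNIV s"
  using integral_split_types[OF integrable_excess[of UNIV s]] by (simp add: excess_def)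

lemma excess_sigF:
  assumes "0 < c"
  shows "excess UNIV (sigF M c) = c"
proof -
  have "measure M (UNIV \<times> UNIV) = 1"
    using prob_space space_eq by simp
  then have "\<exists>!s. excess UNIV s = c"
    using excess_root[OF assms] by simp
  moreover have "sigF M c = (THE s. excess UNIV s = c)"
    by (simp add: sigF_def excess_UNIV)
  ultimately show ?thesis
    using theI' by simp
qed

lemma excess_sigFc:
  assumes "0 < c" and P: "0 < type_prob t"
  shows "excess {t} (sigFc M c t) = c * type_prob t"
proof -
  have "\<exists>!s. excess {t} s = c * type_prob t"
    using assms by (intro excess_root) (simp_all add: type_prob_def)
  moreover have "sigFc M c t = (THE s. excess {t} s = c * type_prob t)"
    using P by (simp add: sigFc_def cond_exp_excess field_simps)
  ultimately show ?thesis
    using theI' by simp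
qed

definition p_gain :: "real \<Rightarrow> real \<Rightarrow> real" where
  "p_gain cf s = (\<integral>x. max 0 (- cf + cond_exp M (fst x) (\<lambda>v. max 0 (v - s))) \<partial>M)"

lemma p_gain_eq_sum: "p_gain cf s = (\<Sum>t\<in>UNIV. max 0 (excess {t} s - cf * type_prob t))"
proof -
  have "max 0 (- cf + cond_exp M t (\<lambda>v. max 0 (v - s))) * type_prob t
      = max 0 (excess {t} s - cf * type_prob t)" for t
  proof (cases "type_prob t = 0")
    case True
    then show ?thesis by (simp add: excess_type_null)
  next
    case False
    then have "0 < type_prob t" using type_prob_nonneg[of t] by simp
    then have "type_prob t * max 0 (excess {t} s / type_prob t - cf)
        = max 0 (type_prob t * (excess {t} s / type_prob t - cf))"
      by (simp add: max_mult_distrib_left)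
    with \<open>0 < type_prob t\<close> show ?thesis
      unfolding cond_exp_excess by (simp add: algebra_simps)
  qed
  then show ?thesis
    unfolding p_gain_def integral_fun_fst(2)[of "\<lambda>t. max 0 (- cf + cond_exp M t (\<lambda>v. max 0 (v - s)))"]
    by (simp only:)
qed

lemma p_gain_antimono: "x \<le> y \<Longrightarrow> p_gain cf y \<le> p_gain cf x"
  unfolding p_gain_eq_sum by (intro sum_mono max.mono diff_right_mono excess_antimono) simp_all

lemma continuous_on_p_gain: "continuous_on S (p_gain cf)"
proof -
  have "p_gain cf = (\<lambda>s. \<Sum>t\<in>UNIV. max 0 (excess {t} s - cf * type_prob t))"
    using p_gain_eq_sum by blast
  then show ?thesis
    by (simp add: continuous_intros continuous_on_excess)
qed

lemma p_gain_strict_antimono: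
  assumes cf: "0 \<le> cf" and xy: "x < y" and pos: "0 < p_gain cf y"
  shows "p_gain cf y < p_gain cf x"
proof -
  define part where "part t s = max 0 (excess {t} s - cf * type_prob t)" for t s
  have gain: "p_gain cf s = (\<Sum>t\<in>UNIV. part t s)" for s
    by (simp add: p_gain_eq_sum part_def)
  have "\<not> (\<forall>t. part t y \<le> 0)"
    using pos sum_nonpos[of UNIV "\<lambda>t. part t y"] unfolding gain by auto
  then obtain t0 where t0: "0 < part t0 y"
    by (auto simp: not_le)
  moreover have "0 \<le> cf * type_prob t0"
    using cf type_prob_nonneg[of t0] by simp
  ultimately have "0 < excess {t0} y"
    by (simp add: part_def)
  then have "excess {t0} y < excess {t0} x"
    by (rule excess_strict_antimono[OF xy])
  then have "part t0 y < part t0 x"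
    using t0 by (auto simp: part_def max_def)
  moreover have "part t y \<le> part t x" for t
    unfolding part_def using xy by (intro max.mono diff_right_mono excess_antimono) simp_all
  ultimately show ?thesis
    unfolding gain by (intro sum_strict_mono_ex1) auto
qed

lemma p_gain_sigP:
  assumes cf: "0 \<le> cf" and cp: "0 < cp"
  shows "p_gain cf (sigP M cf cp) = cp"
proof -
  have "\<not> (\<forall>t. type_prob t \<le> 0)"
    using sum_type_prob sum_nonpos[of UNIV type_prob] by auto
  then obtain t0 where t0: "0 < type_prob t0"
    by (auto simp: not_le)
  obtain a where a: "cp + cf * type_prob t0 < excess {t0} a"
    using excess_unbounded[of "{t0}"] t0 by (auto simp: type_prob_def)
  have "max 0 (excess {t0} a - cf * type_prob t0) \<le> p_gain cf a"
    unfolding p_gain_eq_sum by (rule member_le_sum) simp_all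
  then have above: "cp \<le> p_gain cf a"
    using a by simp
  obtain n where n: "excess UNIV (real n) < cp"
    using order_tendstoD(2)[OF excess_tendsto_0 cp] by (auto simp: eventually_sequentially)
  have "max 0 (excess {t} (real n) - cf * type_prob t) \<le> excess {t} (real n)" for t
    using cf type_prob_nonneg[of t] excess_nonneg[of "{t}" "real n"] by simp
  then have "p_gain cf (real n) \<le> excess UNIV (real n)"
    unfolding p_gain_eq_sum sum_excess_types[symmetric] by (rule sum_mono)
  then have below: "p_gain cf (real n) \<le> cp"
    using n by simp
  have "\<exists>!s. p_gain cf s = cp"
    using continuous_on_p_gain p_gain_strict_antimono[OF cf] above below
    by (rule unique_root_of_continuous_decreasing[OF _ _ cp])
  moreover have "sigP M cf cp = (THE s. p_gain cf s = cp)"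
    by (simp add: sigP_def p_gain_def)
  ultimately show ?thesis
    using theI' by simp
qed
end

section \<open>Upper bound for the optimum\<close>

lemma finite_full_prizes:
  fixes s :: "nat \<Rightarrow> 't bstate"
  shows "finite {v. \<exists>j<N. s j = Full v}"
proof (rule finite_subset)
  show "{v. \<exists>j<N. s j = Full v} \<subseteq> (\<lambda>j. case s j of Full v \<Rightarrow> v | _ \<Rightarrow> 0) ` {..<N}"
    by (auto intro!: image_eqI)
qed (rule finite_imageI, simp)

lemma best_nonneg:
  fixes s :: "nat \<Rightarrow> 't bstate"
  shows "0 \<le> best N s"
  unfolding best_def by (rule Max_ge) (auto simp: finite_full_prizes)

lemma best_update_Full:
  fixes s :: "nat \<Rightarrow> 't bstate"
  assumes "j < N" and "\<forall>w. s j \<noteq> Full w"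
  shows "best N (s(j := Full v)) = max (best N s) v"
proof -
  have "{w. \<exists>k<N. (s(j := Full v)) k = Full w} = insert v {w. \<exists>k<N. s k = Full w}"
    using assms by (auto split: if_splits)
  then have "best N (s(j := Full v)) = Max (insert v (insert 0 {w. \<exists>k<N. s k = Full w}))"
    unfolding best_def by (simp add: insert_commute)
  also have "\<dots> = max v (best N s)"
    unfolding best_def by (subst Max_insert) (auto simp: finite_full_prizes)
  finally show ?thesis
    by simp
qed

lemma best_update_nonFull:
  fixes s :: "nat \<Rightarrow> 't bstate"
  assumes "\<forall>w. s j \<noteq> Full w" and "\<forall>w. b \<noteq> Full w"
  shows "best N (s(j := b)) = best N s"
proof -
  have "{w. \<exists>k<N. (s(j := b)) k = Full w} = {w. \<exists>k<N. s k = Full w}"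
    using assms by (auto split: if_splits)
  then show ?thesis
    unfolding best_def by simp
qed

locale pandora =
  fixes N :: nat and D :: "nat \<Rightarrow> ('t::finite \<times> real) measure" and cF cP :: "nat \<Rightarrow> real"
  assumes box_law: "\<And>j. j < N \<Longrightarrow> box_law (D j)"
    and cF_pos: "\<And>j. j < N \<Longrightarrow> 0 < cF j"
    and cP_pos: "\<And>j. j < N \<Longrightarrow> 0 < cP j"
begin

abbreviation opt :: "nat \<Rightarrow> (nat \<Rightarrow> 't bstate) \<Rightarrow> real" where
  "opt \<equiv> optf N D cF cP"

definition part_gain :: "(nat \<Rightarrow> 't bstate) \<Rightarrow> real \<Rightarrow> nat \<Rightarrow> real" where
  "part_gain s X j = (case s j of
      Part t \<Rightarrow> max 0 (- cF j + cond_exp (D j) t (\<lambda>v. max 0 (v - X)))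
    | _ \<Rightarrow> 0)"

definition slack :: "(nat \<Rightarrow> 't bstate) \<Rightarrow> real \<Rightarrow> real" where
  "slack s X = (\<Sum>j<N. part_gain s X j)"

definition dominated :: "(nat \<Rightarrow> 't bstate) \<Rightarrow> real \<Rightarrow> bool" where
  "dominated s X \<longleftrightarrow> best N s \<le> X \<and>
     (\<forall>j<N. s j = Closed \<longrightarrow> sigF (D j) (cF j) \<le> X \<and> sigP (D j) (cF j) (cP j) \<le> X)"

lemma part_gain_nonneg: "0 \<le> part_gain s X j"
  unfolding part_gain_def by (auto split: bstate.split)

lemma slack_nonneg: "0 \<le> slack s X"
  unfolding slack_def by (intro sum_nonneg part_gain_nonneg)

lemma slack_antimono:
  assumes "X \<le> Y"
  shows "slack s Y \<le> slack s X"
  unfolding slack_def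
proof (rule sum_mono)
  fix j assume "j \<in> {..<N}"
  then interpret box_law "D j"
    using box_law by simp
  show "part_gain s Y j \<le> part_gain s X j"
  proof (cases "s j")
    case (Part t)
    have "max 0 (a - cF j) \<le> max 0 (b - cF j)" if "a \<le> b" for a b
      using that by (simp add: max_def)
    then show ?thesis
      using Part cond_exp_excess_antimono[OF assms, of t] by (simp add: part_gain_def)
  qed (simp_all add: part_gain_def)
qed

lemma slack_update:
  assumes "j < N"
  shows "slack (s(j := b)) X = slack s X - part_gain s X j + part_gain (s(j := b)) X j"
proof -
  have "(\<Sum>k\<in>{..<N} - {j}. part_gain (s(j := b)) X k) = (\<Sum>k\<in>{..<N} - {j}. part_gain s X k)"
    by (intro sum.cong) (auto simp: part_gain_def)
  then show ?thesis
    using assms unfolding slack_def by (simp add: sum.remove)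
qed

lemma dominated_nonneg: "dominated s X \<Longrightarrow> 0 \<le> X"
  using best_nonneg[of N s] by (simp add: dominated_def)

lemma dominated_update_Part:
  assumes "dominated s X" and "s j = Closed"
  shows "dominated (s(j := Part t)) X"
  using assms best_update_nonFull[of s j "Part t" N] by (simp add: dominated_def)

lemma dominated_update_Full:
  assumes "dominated s X" and "j < N" and "\<forall>w. s j \<noteq> Full w"
  shows "dominated (s(j := Full v)) (max X v)"
  using assms best_update_Full[of j N s v] by (auto simp: dominated_def)

context
  fixes n :: nat
  assumes IH: "\<And>s X. dominated s X \<Longrightarrow> opt n s \<le> X + slack s X"
begin

lemma opt_reveal_prize_le:
  assumes "dominated s X" and j: "j < N" and "\<forall>w. s j \<noteq> Full w"
  shows "opt n (s(j := Full v)) \<le> X + (slack s X - part_gain s X j) + max 0 (v - X)"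
proof -
  have "opt n (s(j := Full v)) \<le> max X v + slack (s(j := Full v)) (max X v)"
    using IH dominated_update_Full[OF assms] by blast
  also have "\<dots> \<le> max X v + slack (s(j := Full v)) X"
    by (simp add: slack_antimono)
  also have "\<dots> = max X v + (slack s X - part_gain s X j)"
    using slack_update[OF j] by (simp add: part_gain_def)
  finally show ?thesis
    by linarith
qed

lemma opt_F_open_le:
  assumes dom: "dominated s X" and j: "j < N" and closed: "s j = Closed"
  shows "(\<integral>x. opt n (s(j := Full (snd x))) \<partial>D j) - cF j \<le> X + slack s X"
proof -
  interpret box_law "D j"
    using box_law j by simp
  have bound: "opt n (s(j := Full v)) \<le> X + slack s X + max 0 (v - X)" for v
    using opt_reveal_prize_le[OF dom j] closed by (simp add: part_gain_def)
  have "excess UNIV X \<le> excess UNIV (sigF (D j) (cF j))"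
    using dom j closed by (intro excess_antimono) (simp add: dominated_def)
  then have fair: "(\<integral>x. max 0 (snd x - X) \<partial>D j) \<le> cF j"
    using excess_sigF cF_pos[OF j] by (simp add: excess_UNIV)
  show ?thesis
  proof (cases "integrable (D j) (\<lambda>x. opt n (s(j := Full (snd x))))")
    case True
    have "(\<integral>x. opt n (s(j := Full (snd x))) \<partial>D j) \<le> (\<integral>x. X + slack s X + max 0 (snd x - X) \<partial>D j)"
      using integrable_excess[of UNIV X] bound by (intro integral_mono True) simp_all
    also have "\<dots> = X + slack s X + (\<integral>x. max 0 (snd x - X) \<partial>D j)"
      using integrable_excess[of UNIV X] by (simp add: prob_space)
    finally show ?thesis
      using fair by linarith
  next
    case False
    then show ?thesis
      using dominated_nonneg[OF dom] slack_nonneg[of s X] cF_pos[OF j]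
      by (simp add: not_integrable_integral_eq)
  qed
qed

lemma opt_P_open_le:
  assumes dom: "dominated s X" and j: "j < N" and closed: "s j = Closed"
  shows "(\<integral>x. opt n (s(j := Part (fst x))) \<partial>D j) - cP j \<le> X + slack s X"
proof -
  interpret box_law "D j"
    using box_law j by simp
  define g where "g t = max 0 (- cF j + cond_exp (D j) t (\<lambda>v. max 0 (v - X)))" for t
  have bound: "opt n (s(j := Part t)) \<le> X + slack s X + g t" for t
  proof -
    have "opt n (s(j := Part t)) \<le> X + slack (s(j := Part t)) X"
      using IH dominated_update_Part[OF dom closed] by blast
    then show ?thesis
      using slack_update[OF j, of s "Part t" X] closed by (simp add: part_gain_def g_def)
  qed
  have "p_gain (cF j) X \<le> p_gain (cF j) (sigP (D j) (cF j) (cP j))"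
    using dom j closed by (intro p_gain_antimono) (simp add: dominated_def)
  then have fair: "(\<integral>x. g (fst x) \<partial>D j) \<le> cP j"
    using p_gain_sigP cF_pos[OF j] cP_pos[OF j] by (simp add: p_gain_def g_def)
  have "(\<integral>x. opt n (s(j := Part (fst x))) \<partial>D j) \<le> (\<integral>x. X + slack s X + g (fst x) \<partial>D j)"
    using bound by (intro integral_mono integral_fun_fst(1)) (simp_all add: integral_fun_fst(1))
  also have "\<dots> = X + slack s X + (\<integral>x. g (fst x) \<partial>D j)"
    using integral_fun_fst(1)[of g] by (simp add: prob_space)
  finally show ?thesis
    using fair by linarith
qed

lemma opt_Part_open_le:
  assumes dom: "dominated s X" and j: "j < N" and part: "s j = Part t"
  shows "cond_exp (D j) t (\<lambda>v. opt n (s(j := Full v))) - cF j \<le> X + slack s X"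
proof -
  interpret box_law "D j"
    using box_law j by simp
  define R where "R = slack s X - part_gain s X j"
  have R: "R + max 0 (- cF j + cond_exp (D j) t (\<lambda>v. max 0 (v - X))) = slack s X"
    using part by (simp add: R_def part_gain_def)
  have R0: "0 \<le> R"
    using slack_update[OF j, of s "Full 0" X] slack_nonneg[of "s(j := Full 0)" X]
    by (simp add: R_def part_gain_def)
  have "opt n (s(j := Full v)) \<le> (X + R) + max 0 (v - X)" for v
    using opt_reveal_prize_le[OF dom j] part unfolding R_def by simp
  then have "cond_exp (D j) t (\<lambda>v. opt n (s(j := Full v))) \<le> X + R + cond_exp (D j) t (\<lambda>v. max 0 (v - X))"
    using dominated_nonneg[OF dom] R0 by (intro cond_exp_le_const_plus_excess) simp_all
  then show ?thesis
    using R by linarith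
qed

end

lemma opt_le_slack: "dominated s X \<Longrightarrow> opt n s \<le> X + slack s X"
proof (induction n arbitrary: s X)
  case 0
  then show ?case
    using slack_nonneg[of s X] by (simp add: dominated_def)
next
  case (Suc n)
  let ?U = "\<Union>j\<in>{..<N}. (case s j of
      Closed \<Rightarrow> {- cF j + (\<integral>x. opt n (s(j := Full (snd x))) \<partial>D j),
                 - cP j + (\<integral>x. opt n (s(j := Part (fst x))) \<partial>D j)}
    | Part t \<Rightarrow> {- cF j + cond_exp (D j) t (\<lambda>v. opt n (s(j := Full v)))}
    | Full v \<Rightarrow> {})"
  have "finite ?U"
    by (intro finite_UN_I) (auto split: bstate.split)
  moreover have "y \<le> X + slack s X" if "y \<in> ?U" for y
  proof -
    from that obtain j where j: "j < N" and y: "y \<in> (case s j of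
        Closed \<Rightarrow> {- cF j + (\<integral>x. opt n (s(j := Full (snd x))) \<partial>D j),
                   - cP j + (\<integral>x. opt n (s(j := Part (fst x))) \<partial>D j)}
      | Part t \<Rightarrow> {- cF j + cond_exp (D j) t (\<lambda>v. opt n (s(j := Full v)))}
      | Full v \<Rightarrow> {})"
      by blast
    note F = opt_F_open_le[OF Suc.IH Suc.prems j] and P = opt_P_open_le[OF Suc.IH Suc.prems j]
      and Part = opt_Part_open_le[OF Suc.IH Suc.prems j]
    show ?thesis
      using y F P Part by (cases "s j") auto
  qed
  ultimately show ?case
    unfolding optf.simps using Suc.prems slack_nonneg[of s X]
    by (intro Max.boundedI) (auto simp: dominated_def)
qed

end

section \<open>Lower bound for the policies\<close>

text \<open>The value of keeping b, or getting \<sigma> as soon as one of m independent trials with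
  success probability u succeeds.\<close>

definition reach_value :: "real \<Rightarrow> real \<Rightarrow> nat \<Rightarrow> real \<Rightarrow> real" where
  "reach_value \<sigma> u m b = (if \<sigma> \<le> b then b else b + (\<sigma> - b) * (1 - (1 - u) ^ m))"

lemma reach_value_ge:
  assumes "0 \<le> u" and "u \<le> 1"
  shows "b \<le> reach_value \<sigma> u m b"
proof -
  have "(1 - u) ^ m \<le> 1"
    using assms by (intro power_le_one) auto
  then show ?thesis
    unfolding reach_value_def by auto
qed

lemma reach_value_Suc:
  assumes "b < \<sigma>"
  shows "reach_value \<sigma> u (Suc m) b = reach_value \<sigma> u m b + (\<sigma> - reach_value \<sigma> u m b) * u"
  using assms unfolding reach_value_def by (simp add: algebra_simps)

lemma reach_value_ge_affine:
  fixes m :: nat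
  assumes b: "b < \<sigma>" and u: "0 \<le> u" "u \<le> 1" and ba: "b \<le> a"
  defines "K \<equiv> reach_value \<sigma> u m b"
  shows "K + max 0 (a - \<sigma>) + (\<sigma> - K) * indicator {\<sigma><..} a \<le> reach_value \<sigma> u m a"
proof -
  define r where "r = 1 - (1 - u) ^ m"
  have r: "0 \<le> r" "r \<le> 1"
    unfolding r_def using u by (auto intro!: power_le_one)
  have K: "K = b + (\<sigma> - b) * r"
    using b unfolding K_def reach_value_def r_def by simp
  show ?thesis
  proof (cases "\<sigma> < a")
    case True
    then show ?thesis
      unfolding reach_value_def by simp
  next
    case False
    have "(\<sigma> - b) * r \<le> \<sigma> - b"
      using b r by (intro mult_right_le_one_le) auto
    moreover have "a + (\<sigma> - a) * r = K + (a - b) * (1 - r)"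
      unfolding K by (simp add: algebra_simps)
    moreover have "0 \<le> (a - b) * (1 - r)"
      using ba r by simp
    ultimately show ?thesis
      using False unfolding reach_value_def r_def[symmetric] K by auto
  qed
qed

lemma ratio_bound:
  fixes u a \<sigma> opt v :: real and n :: nat
  assumes u: "0 \<le> u" "u \<le> 1" and a: "0 < a" "a < real n"
    and opt: "opt \<le> max 0 \<sigma>" and v: "reach_value \<sigma> u n 0 \<le> v"
  shows "(1 - (1 - u) powr a) * opt \<le> v"
proof -
  have ratio: "0 \<le> 1 - (1 - u) powr a"
    using u a by (simp add: powr_le1)
  show ?thesis
  proof (cases "\<sigma> \<le> 0")
    case True
    then have "(1 - (1 - u) powr a) * opt \<le> 0"
      using opt ratio by (simp add: mult_nonneg_nonpos)
    moreover have "0 \<le> v"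
      using v True by (simp add: reach_value_def)
    ultimately show ?thesis
      by linarith
  next
    case False
    have "(1 - u) ^ n \<le> (1 - u) powr a"
    proof (cases "u = 1")
      case True
      then show ?thesis
        using a by (cases n) simp_all
    next
      case False
      then have "(1 - u) ^ n = (1 - u) powr real n"
        using u by (simp add: powr_realpow)
      also have "\<dots> \<le> (1 - u) powr a"
        using a u by (intro powr_mono') auto
      finally show ?thesis .
    qed
    then have "(1 - (1 - u) powr a) * opt \<le> (1 - (1 - u) powr a) * \<sigma>"
      using opt False ratio by (intro mult_left_mono) auto
    also have "\<dots> \<le> (1 - (1 - u) ^ n) * \<sigma>"
      using \<open>(1 - u) ^ n \<le> (1 - u) powr a\<close> False by (intro mult_right_mono) auto
    also have "\<dots> = reach_value \<sigma> u n 0"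
      using False by (simp add: reach_value_def)
    finally show ?thesis
      using v by linarith
  qed
qed

definition continuation :: "('t \<times> real) measure \<Rightarrow> real \<Rightarrow> ('t \<Rightarrow> bool) \<Rightarrow> (real \<Rightarrow> real) \<Rightarrow> real \<Rightarrow> real" where
  "continuation M cf good f b =
     (\<integral>x. (if good (fst x) then - cf + cond_exp M (fst x) (\<lambda>v. f (max b v)) else f b) \<partial>M)"

text \<open>Expected profit of inspecting at most m fresh boxes of law M one after another, holding the
  best prize b: stop once b reaches \<sigma>, otherwise pay cp to reveal the type of a new box and, if
  the type is good, pay cf to reveal its prize.\<close>

primrec inspect_value ::
  "('t \<times> real) measure \<Rightarrow> real \<Rightarrow> real \<Rightarrow> real \<Rightarrow> ('t \<Rightarrow> bool) \<Rightarrow> nat \<Rightarrow> real \<Rightarrow> real" where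
  "inspect_value M cf cp \<sigma> good 0 b = b"
| "inspect_value M cf cp \<sigma> good (Suc m) b =
     (if \<sigma> \<le> b then b else - cp + continuation M cf good (inspect_value M cf cp \<sigma> good m) b)"

lemma inspect_value_stop: "\<sigma> \<le> b \<Longrightarrow> inspect_value M cf cp \<sigma> good m b = b"
  by (cases m) simp_all

context box_law
begin

lemma continuation_eq_sum:
  "continuation M cf good f b =
     (\<Sum>t\<in>UNIV. if good t then (\<integral>x. indicator {t} (fst x) * f (max b (snd x)) \<partial>M) - cf * type_prob t
                else f b * type_prob t)"
proof -
  have "continuation M cf good f b = (\<Sum>t\<in>UNIV. (if good t then - cf + cond_exp M t (\<lambda>v. f (max b v)) else f b) * type_prob t)"
    unfolding continuation_def
    by (rule integral_fun_fst(2)[of "\<lambda>t. if good t then - cf + cond_exp M t (\<lambda>v. f (max b v)) else f b"])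
  also have "\<dots> = (\<Sum>t\<in>UNIV. if good t then (\<integral>x. indicator {t} (fst x) * f (max b (snd x)) \<partial>M) - cf * type_prob t
                else f b * type_prob t)"
    using type_prob_mult_cond_exp[of _ "\<lambda>v. f (max b v)"]
    by (intro sum.cong refl) (simp add: algebra_simps)
  finally show ?thesis .
qed

lemma integrable_indicator_fst_mult_snd:
  assumes "g \<in> borel_measurable borel" and "\<And>v. \<bar>g v\<bar> \<le> a + c * \<bar>v\<bar>"
  shows "integrable M (\<lambda>x. indicator A (fst x) * g (snd x))"
proof (rule integrable_linear_growth[where a = a and b = c])
  show "(\<lambda>x. indicator A (fst x) * g (snd x)) \<in> borel_measurable M"
    using assms(1) by measurable
  show "\<bar>indicator A (fst x) * g (snd x)\<bar> \<le> a + c * \<bar>snd x\<bar>" for x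
    using assms(2)[of "snd x"] abs_ge_zero[of "g (snd x)"] by (auto simp: indicator_def)
qed

lemma continuation_mono:
  assumes "\<And>t. integrable M (\<lambda>x. indicator {t} (fst x) * f (max b (snd x)))"
    and "\<And>t. integrable M (\<lambda>x. indicator {t} (fst x) * g (max b' (snd x)))"
    and "\<And>v. f (max b v) \<le> g (max b' v)" and "f b \<le> g b'"
  shows "continuation M cf good f b \<le> continuation M cf good g b'"
  unfolding continuation_eq_sum
proof (rule sum_mono)
  fix t
  have "(\<integral>x. indicator {t} (fst x) * f (max b (snd x)) \<partial>M) \<le> (\<integral>x. indicator {t} (fst x) * g (max b' (snd x)) \<partial>M)"
    using assms by (intro integral_mono mult_left_mono) simp_all
  moreover have "f b * type_prob t \<le> g b' * type_prob t"
    using assms(4) type_prob_nonneg by (rule mult_right_mono)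
  ultimately show "(if good t then (\<integral>x. indicator {t} (fst x) * f (max b (snd x)) \<partial>M) - cf * type_prob t
                    else f b * type_prob t)
      \<le> (if good t then (\<integral>x. indicator {t} (fst x) * g (max b' (snd x)) \<partial>M) - cf * type_prob t
         else g b' * type_prob t)"
    by simp
qed

lemma continuation_all_good:
  assumes "integrable M (\<lambda>x. f (max b (snd x)))"
  shows "continuation M 0 (\<lambda>_. True) f b = (\<integral>x. f (max b (snd x)) \<partial>M)"
  using integral_cond_exp[OF assms] by (simp add: continuation_def)

end

locale inspection = box_law M for M :: "('t::finite \<times> real) measure" +
  fixes cf cp \<sigma> :: real and good :: "'t \<Rightarrow> bool"
  assumes p_gain_eq: "p_gain cf \<sigma> = cp"
    and good_gain: "\<And>t. good t \<Longrightarrow> cf * type_prob t \<le> excess {t} \<sigma>"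
    and bad_gain: "\<And>t. \<not> good t \<Longrightarrow> excess {t} \<sigma> \<le> cf * type_prob t"
begin

definition success :: real where
  "success = measure M {x. \<sigma> < snd x \<and> good (fst x)}"

lemma success_bounds: "0 \<le> success" "success \<le> 1"
  by (simp_all add: success_def)

lemma cp_eq_sum: "cp = (\<Sum>t\<in>UNIV. if good t then excess {t} \<sigma> - cf * type_prob t else 0)"
proof -
  have "max 0 (excess {t} \<sigma> - cf * type_prob t) = (if good t then excess {t} \<sigma> - cf * type_prob t else 0)" for t
    using good_gain[of t] bad_gain[of t] by (cases "good t") (simp_all add: max_def)
  then show ?thesis
    unfolding p_gain_eq[symmetric] p_gain_eq_sum by simp
qed

lemma success_eq_sum:
  "success = (\<Sum>t\<in>UNIV. if good t then (\<integral>x. indicator {t} (fst x) * indicator {\<sigma><..} (snd x) \<partial>M) else 0)"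
proof -
  have "{x. \<sigma> < snd x \<and> good (fst x)} \<in> sets M"
  proof -
    have "{x \<in> space M. \<sigma> < snd x \<and> good (fst x)} \<in> sets M"
      by measurable
    then show ?thesis
      by (simp add: space_eq)
  qed
  then have "success = (\<integral>x. indicator {x. \<sigma> < snd x \<and> good (fst x)} x \<partial>M)"
    by (simp add: success_def space_eq)
  also have "\<dots> = (\<Sum>t\<in>UNIV. \<integral>x. indicator {t} (fst x) * indicator {x. \<sigma> < snd x \<and> good (fst x)} x \<partial>M)"
    using \<open>_ \<in> sets M\<close> by (intro integral_split_types) (simp add: emeasure_eq_measure)
  also have "\<dots> = (\<Sum>t\<in>UNIV. if good t then (\<integral>x. indicator {t} (fst x) * indicator {\<sigma><..} (snd x) \<partial>M) else 0)"
  proof (intro sum.cong refl)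
    fix t
    have pointwise: "indicator {t} (fst x) * indicator {x. \<sigma> < snd x \<and> good (fst x)} x
        = (if good t then indicator {t} (fst x) * indicator {\<sigma><..} (snd x) else 0 :: real)" for x
      by (auto simp: indicator_def)
    then show "(\<integral>x. indicator {t} (fst x) * indicator {x. \<sigma> < snd x \<and> good (fst x)} x \<partial>M)
        = (if good t then (\<integral>x. indicator {t} (fst x) * indicator {\<sigma><..} (snd x) \<partial>M) else 0 :: real)"
      by (cases "good t") (simp_all only: pointwise if_True if_False Bochner_Integration.integral_zero)
  qed
  finally show ?thesis .
qed

lemma continuation_affine:
  assumes "b < \<sigma>"
  shows "continuation M cf good (\<lambda>a. \<alpha> + max 0 (a - \<sigma>) + \<beta> * indicator {\<sigma><..} a) b
       = cp + \<alpha> + \<beta> * success"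
proof -
  have gain: "(\<integral>x. indicator {t} (fst x) * (\<alpha> + max 0 (max b (snd x) - \<sigma>) + \<beta> * indicator {\<sigma><..} (max b (snd x))) \<partial>M)
      = \<alpha> * type_prob t + excess {t} \<sigma> + \<beta> * (\<integral>x. indicator {t} (fst x) * indicator {\<sigma><..} (snd x) \<partial>M)" for t
  proof -
    have "indicator {t} (fst x) * (\<alpha> + max 0 (max b (snd x) - \<sigma>) + \<beta> * indicator {\<sigma><..} (max b (snd x)))
        = \<alpha> * indicator {t} (fst x) + indicator {t} (fst x) * max 0 (snd x - \<sigma>)
          + \<beta> * (indicator {t} (fst x) * indicator {\<sigma><..} (snd x))" for x :: "'t \<times> real"
      using assms by (auto simp: indicator_def max_def)
    moreover have "integrable M (\<lambda>x. indicator {t} (fst x) * indicator {\<sigma><..} (snd x) :: real)"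
      by (rule integrable_indicator_fst_mult_snd[where a = 1 and c = 0]) (auto simp: indicator_def)
    ultimately show ?thesis
      using integrable_excess[of "{t}" \<sigma>] integral_fun_fst(1)[of "indicator {t}"]
      by (simp add: excess_def integral_indicator_type)
  qed
  have "continuation M cf good (\<lambda>a. \<alpha> + max 0 (a - \<sigma>) + \<beta> * indicator {\<sigma><..} a) b
      = (\<Sum>t\<in>UNIV. \<alpha> * type_prob t + (if good t then excess {t} \<sigma> - cf * type_prob t else 0)
          + \<beta> * (if good t then (\<integral>x. indicator {t} (fst x) * indicator {\<sigma><..} (snd x) \<partial>M) else 0))"
    unfolding continuation_eq_sum gain using assms by (intro sum.cong refl) auto
  also have "\<dots> = cp + \<alpha> + \<beta> * success"
    unfolding sum.distrib cp_eq_sum success_eq_sum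
    by (simp add: sum_distrib_left[symmetric] sum_type_prob)
  finally show ?thesis .
qed

context
  fixes f :: "real \<Rightarrow> real"
  assumes f_mono: "mono f" and f_ge: "\<And>a. a \<le> f a" and f_le: "\<And>a. f a \<le> max a \<sigma>"
begin

lemma integrable_continuation_arg: "integrable M (\<lambda>x. indicator A (fst x) * f (max b (snd x)))"
proof (rule integrable_indicator_fst_mult_snd[where a = "\<bar>b\<bar> + \<bar>\<sigma>\<bar>" and c = 1])
  show "(\<lambda>v. f (max b v)) \<in> borel_measurable borel"
    using borel_measurable_mono[OF f_mono] by measurable
  show "\<bar>f (max b v)\<bar> \<le> \<bar>b\<bar> + \<bar>\<sigma>\<bar> + 1 * \<bar>v\<bar>" for v
    using f_ge[of "max b v"] f_le[of "max b v"] by (auto simp: max_def abs_if split: if_splits)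
qed

lemma integrable_affine_arg:
  "integrable M (\<lambda>x. indicator {t} (fst x) * (\<alpha> + max 0 (max b (snd x) - \<sigma>) + \<beta> * indicator {\<sigma><..} (max b (snd x))))"
  by (rule integrable_indicator_fst_mult_snd[where a = "\<bar>\<alpha>\<bar> + \<bar>b\<bar> + \<bar>\<sigma>\<bar> + \<bar>\<beta>\<bar>" and c = 1])
     (auto simp: indicator_def max_def abs_if)

lemma continuation_le:
  assumes "b < \<sigma>"
  shows "- cp + continuation M cf good f b \<le> \<sigma>"
proof -
  have "continuation M cf good f b \<le> continuation M cf good (\<lambda>a. \<sigma> + max 0 (a - \<sigma>) + 0 * indicator {\<sigma><..} a) b"
  proof (intro continuation_mono integrable_continuation_arg integrable_affine_arg)
    show "f (max b v) \<le> \<sigma> + max 0 (max b v - \<sigma>) + 0 * indicator {\<sigma><..} (max b v)" for v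
      using f_le[of "max b v"] by linarith
    show "f b \<le> \<sigma> + max 0 (b - \<sigma>) + 0 * indicator {\<sigma><..} b"
      using f_le[of b] assms by linarith
  qed
  then show ?thesis
    using continuation_affine[OF assms, of \<sigma> 0] by simp
qed

lemma continuation_ge:
  assumes b: "b < \<sigma>" and lower: "\<And>a. reach_value \<sigma> success m a \<le> f a"
  shows "reach_value \<sigma> success (Suc m) b \<le> - cp + continuation M cf good f b"
proof -
  define K where "K = reach_value \<sigma> success m b"
  have "continuation M cf good (\<lambda>a. K + max 0 (a - \<sigma>) + (\<sigma> - K) * indicator {\<sigma><..} a) b
      \<le> continuation M cf good f b"
  proof (intro continuation_mono integrable_continuation_arg integrable_affine_arg)
    show "K + max 0 (max b v - \<sigma>) + (\<sigma> - K) * indicator {\<sigma><..} (max b v) \<le> f (max b v)" for v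
      using reach_value_ge_affine[OF b success_bounds, of "max b v" m] lower[of "max b v"]
      unfolding K_def by simp
    show "K + max 0 (b - \<sigma>) + (\<sigma> - K) * indicator {\<sigma><..} b \<le> f b"
      using b lower[of b] unfolding K_def by simp
  qed
  then show ?thesis
    using continuation_affine[OF b] reach_value_Suc[OF b] unfolding K_def by simp
qed

lemma continuation_mono_arg:
  assumes "b1 \<le> b2"
  shows "continuation M cf good f b1 \<le> continuation M cf good f b2"
  using assms
  by (intro continuation_mono integrable_continuation_arg monoD[OF f_mono]) auto

end

lemma inspect_value_bounds:
  "mono (inspect_value M cf cp \<sigma> good m)
   \<and> (\<forall>a. reach_value \<sigma> success m a \<le> inspect_value M cf cp \<sigma> good m a)
   \<and> (\<forall>a. inspect_value M cf cp \<sigma> good m a \<le> max a \<sigma>)"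
proof (induction m)
  case 0
  then show ?case
    by (simp add: mono_def reach_value_def)
next
  case (Suc m)
  let ?f = "inspect_value M cf cp \<sigma> good m"
  have mono: "mono ?f" and lower: "\<And>a. reach_value \<sigma> success m a \<le> ?f a"
    and upper: "\<And>a. ?f a \<le> max a \<sigma>"
    using Suc.IH by auto
  have ge: "a \<le> ?f a" for a
    using reach_value_ge[OF success_bounds, of a \<sigma> m] lower[of a] by linarith
  note le = continuation_le[OF mono ge upper] and mono_arg = continuation_mono_arg[OF mono ge upper]
  have "inspect_value M cf cp \<sigma> good (Suc m) a \<le> max a \<sigma>" for a
    using le[of a] by auto
  moreover have "reach_value \<sigma> success (Suc m) a \<le> inspect_value M cf cp \<sigma> good (Suc m) a" for a
    using continuation_ge[OF mono ge upper _ lower, of a] by (simp add: reach_value_def)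
  moreover have "mono (inspect_value M cf cp \<sigma> good (Suc m))"
  proof (rule monoI)
    fix b1 b2 :: real assume "b1 \<le> b2"
    then show "inspect_value M cf cp \<sigma> good (Suc m) b1 \<le> inspect_value M cf cp \<sigma> good (Suc m) b2"
      using le[of b1] mono_arg[of b1 b2] by auto
  qed
  ultimately show ?case
    by blast
qed

lemma inspect_value_ge: "a \<le> inspect_value M cf cp \<sigma> good m a"
  using inspect_value_bounds[of m] reach_value_ge[OF success_bounds, of a \<sigma> m] order_trans by blast

lemma integrable_inspect_value:
  "integrable M (\<lambda>x. indicator A (fst x) * inspect_value M cf cp \<sigma> good m (max b (snd x)))"
  using inspect_value_bounds[of m] inspect_value_ge by (intro integrable_continuation_arg) auto

end

context box_law
begin

text \<open>F-opening a box is the inspection that reveals the type together with the prize at cost c,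
  after which every type is good and revealing the prize costs nothing more.\<close>

lemma inspection_F_open:
  assumes "0 < c"
  shows "inspection M 0 c (sigF M c) (\<lambda>_. True)"
proof
  have "p_gain 0 (sigF M c) = excess UNIV (sigF M c)"
    by (simp add: p_gain_eq_sum sum_excess_types excess_nonneg)
  then show "p_gain 0 (sigF M c) = c"
    using excess_sigF[OF assms] by simp
qed (simp_all add: excess_nonneg)

lemma inspection_P_open:
  assumes cf: "0 < cf" and cp: "0 < cp"
  shows "inspection M cf cp (sigP M cf cp) (\<lambda>t. sigP M cf cp < sigFc M cf t)"
proof
  show "p_gain cf (sigP M cf cp) = cp"
    using p_gain_sigP cf cp by simp
  show "cf * type_prob t \<le> excess {t} (sigP M cf cp)" if "sigP M cf cp < sigFc M cf t" for t
  proof (cases "type_prob t = 0")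
    case False
    then have "0 < type_prob t"
      using type_prob_nonneg[of t] by simp
    then show ?thesis
      using excess_sigFc[OF cf] excess_antimono[of "sigP M cf cp" "sigFc M cf t" "{t}"] that by simp
  qed (simp add: excess_nonneg)
  show "excess {t} (sigP M cf cp) \<le> cf * type_prob t" if "\<not> sigP M cf cp < sigFc M cf t" for t
  proof (cases "type_prob t = 0")
    case False
    then have "0 < type_prob t"
      using type_prob_nonneg[of t] by simp
    then show ?thesis
      using excess_sigFc[OF cf] excess_antimono[of "sigFc M cf t" "sigP M cf cp" "{t}"] that by simp
  qed (simp add: excess_type_null)
qed

end

section \<open>Values of the two policies\<close>

lemma (in finite_measure) measure_div_mult_cancel:
  assumes "A \<subseteq> B" and "B \<in> sets M"
  shows "measure M A / measure M B * measure M B = measure M A"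
  using finite_measure_mono[OF assms] measure_nonneg[of M A] by (cases "measure M B = 0") simp_all

lemma polf_None: "\<pi> s = None \<Longrightarrow> polf N D cF cP \<pi> n s = best N s"
  by (cases n) simp_all

lemma find_upt_cases:
  obtains "find P [0..<N] = None" and "\<forall>j<N. \<not> P j"
  | j where "find P [0..<N] = Some j" and "j < N" and "P j"
proof (cases "find P [0..<N]")
  case None
  then show ?thesis
    using that(1) by (simp add: find_None_iff)
next
  case (Some j)
  moreover have "j < N \<and> P j"
    using Some by (auto simp: find_Some_iff)
  ultimately show ?thesis
    using that(2) by blast
qed

context pandora
begin

definition max_threshold :: real where
  "max_threshold = Max {max (sigF (D j) (cF j)) (sigP (D j) (cF j) (cP j)) | j. j < N}"

lemma thresholds_le_max_threshold:
  assumes "j < N"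
  shows "sigF (D j) (cF j) \<le> max_threshold" and "sigP (D j) (cF j) (cP j) \<le> max_threshold"
proof -
  have "finite {max (sigF (D j) (cF j)) (sigP (D j) (cF j) (cP j)) | j. j < N}"
    by simp
  then have "max (sigF (D j) (cF j)) (sigP (D j) (cF j) (cP j)) \<le> max_threshold"
    unfolding max_threshold_def using assms by (intro Max_ge) auto
  then show "sigF (D j) (cF j) \<le> max_threshold" and "sigP (D j) (cF j) (cP j) \<le> max_threshold"
    by simp_all
qed

lemma opt_value_le_max_threshold: "opt_value N D cF cP \<le> max 0 max_threshold"
proof -
  have "dominated (\<lambda>_. Closed) (max 0 max_threshold)"
    using thresholds_le_max_threshold by (fastforce simp: dominated_def best_def)
  moreover have "slack (\<lambda>_. Closed) X = 0" for X
    by (simp add: slack_def part_gain_def)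
  ultimately show ?thesis
    unfolding opt_value_def using opt_le_slack by fastforce
qed

end

locale class_policy = pandora N D cF cP
  for N and D :: "nat \<Rightarrow> ('t::finite \<times> real) measure" and cF cP +
  fixes cls :: "nat \<Rightarrow> nat" and i j0 :: nat
  assumes j0: "j0 < N" "cls j0 = i"
    and cls_ident: "\<And>j j'. j < N \<Longrightarrow> j' < N \<Longrightarrow> cls j = cls j' \<Longrightarrow>
                      D j = D j' \<and> cF j = cF j' \<and> cP j = cP j'"
begin

lemma same_class: "j < N \<Longrightarrow> cls j = i \<Longrightarrow> D j = D j0 \<and> cF j = cF j0 \<and> cP j = cP j0"
  using cls_ident[of j j0] j0 by simp

definition closed_count :: "(nat \<Rightarrow> 't bstate) \<Rightarrow> nat" where
  "closed_count s = card {j. j < N \<and> cls j = i \<and> s j = Closed}"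

lemma closed_count_initial: "closed_count (\<lambda>_. Closed) = card {j. j < N \<and> cls j = i}"
  by (simp add: closed_count_def)

lemma closed_count_le: "closed_count s \<le> N"
  unfolding closed_count_def using card_mono[of "{..<N}" "{j. j < N \<and> cls j = i \<and> s j = Closed}"]
  by auto

lemma closed_count_eq_0: "closed_count s = 0 \<longleftrightarrow> (\<forall>j<N. cls j = i \<longrightarrow> s j \<noteq> Closed)"
  unfolding closed_count_def by auto

lemma closed_count_update:
  assumes "j < N" "cls j = i" "s j = Closed" "b \<noteq> Closed"
  shows "closed_count (s(j := b)) = closed_count s - 1"
proof -
  have "{k. k < N \<and> cls k = i \<and> (s(j := b)) k = Closed} = {k. k < N \<and> cls k = i \<and> s k = Closed} - {j}"
    using assms by auto
  then show ?thesis
    unfolding closed_count_def using assms by (simp add: card_Diff_singleton)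
qed

abbreviation good :: "'t \<Rightarrow> bool" where
  "good t \<equiv> max_threshold < sigFc (D j0) (cF j0) t"

abbreviation valF :: "nat \<Rightarrow> (nat \<Rightarrow> 't bstate) \<Rightarrow> real" where
  "valF \<equiv> polf N D cF cP (polF N D cF cP cls i)"

abbreviation valP :: "nat \<Rightarrow> (nat \<Rightarrow> 't bstate) \<Rightarrow> real" where
  "valP \<equiv> polf N D cF cP (polP N D cF cP cls i)"

abbreviation inspF :: "nat \<Rightarrow> real \<Rightarrow> real" where
  "inspF \<equiv> inspect_value (D j0) 0 (cF j0) max_threshold (\<lambda>_. True)"

abbreviation inspP :: "nat \<Rightarrow> real \<Rightarrow> real" where
  "inspP \<equiv> inspect_value (D j0) (cF j0) (cP j0) max_threshold good"

definition settled :: "(nat \<Rightarrow> 't bstate) \<Rightarrow> bool" where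
  "settled s \<longleftrightarrow> (\<forall>j<N. \<forall>t. s j = Part t \<longrightarrow> cls j = i \<and> \<not> good t)"

lemma settled_initial: "settled (\<lambda>_. Closed)"
  by (simp add: settled_def)

lemma stop_rule_if_settled:
  assumes "settled s" and "max_threshold \<le> best N s"
  shows "stop_rule N D cF cP s"
  unfolding stop_rule_def
proof (intro allI impI)
  fix j assume j: "j < N"
  show "case s j of Closed \<Rightarrow> sigF (D j) (cF j) \<le> best N s \<and> sigP (D j) (cF j) (cP j) \<le> best N s
      | Part t \<Rightarrow> sigFc (D j) (cF j) t \<le> best N s | Full v \<Rightarrow> True"
  proof (cases "s j")
    case (Part t)
    then have "cls j = i" and "\<not> good t"
      using assms(1) j by (auto simp: settled_def)
    then show ?thesis
      using Part assms(2) same_class[OF j] by simp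
  qed (use assms(2) thresholds_le_max_threshold[OF j] in auto)
qed

lemma open_closed_box:
  assumes "settled s" and j: "j < N" "cls j = i" "s j = Closed" and m: "closed_count s = Suc m"
  shows "settled (s(j := Full v))" and "closed_count (s(j := Full v)) = m"
    and "best N (s(j := Full v)) = max (best N s) v"
    and "\<not> good t \<Longrightarrow> settled (s(j := Part t))" and "closed_count (s(j := Part t)) = m"
    and "best N (s(j := Part t)) = best N s"
  using assms closed_count_update[of j s "Full v"] closed_count_update[of j s "Part t"]
    best_update_Full[of j N s v] best_update_nonFull[of s j "Part t" N]
  by (auto simp: settled_def)

lemma polF_after_F_open:
  assumes IH: "\<And>s'. settled s' \<Longrightarrow> closed_count s' \<le> k \<Longrightarrow> valF k s' = inspF (closed_count s') (best N s')"
    and s: "settled s" and j: "j < N" "cls j = i" "s j = Closed" and m: "closed_count s = Suc m"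
    and fuel: "m \<le> k"
  shows "valF k (s(j := Full v)) = inspF m (max (best N s) v)"
  using IH[OF open_closed_box(1)[OF s j m]] fuel
  unfolding open_closed_box(2,3)[OF s j m] by (simp add: fun_upd_def)

lemma polF_value:
  assumes sF: "sigF (D j0) (cF j0) = max_threshold"
    and "settled s" and "closed_count s \<le> n"
  shows "valF n s = inspF (closed_count s) (best N s)"
  using assms(2,3)
proof (induction n arbitrary: s)
  case 0
  then show ?case by simp
next
  case (Suc n)
  interpret inspection "D j0" 0 "cF j0" max_threshold "\<lambda>_. True"
    using box_law.inspection_F_open[OF box_law[OF j0(1)] cF_pos[OF j0(1)]] sF by simp
  define b where "b = best N s"
  show ?case
  proof (cases rule: find_upt_cases[of "\<lambda>j. cls j = i \<and> s j = Closed" N])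
    case 1
    then have "polF N D cF cP cls i s = None" and "closed_count s = 0"
      using closed_count_eq_0[of s] by (simp_all add: polF_def)
    then show ?thesis
      by (simp add: polf_None)
  next
    case (2 j)
    then have j: "j < N" "cls j = i" "s j = Closed"
      by auto
    then obtain m where m: "closed_count s = Suc m"
      using closed_count_eq_0[of s] by (cases "closed_count s") auto
    show ?thesis
    proof (cases "max_threshold \<le> b")
      case True
      then have "polF N D cF cP cls i s = None"
        using stop_rule_if_settled[OF Suc.prems(1)] by (simp add: polF_def b_def)
      moreover have "inspF (closed_count s) b = b"
        using True by (rule inspect_value_stop)
      ultimately show ?thesis
        by (simp add: polf_None b_def)
    next
      case False
      have "\<not> stop_rule N D cF cP s"
        using j False same_class[OF j(1,2)] sF unfolding stop_rule_def b_def by force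
      then have "polF N D cF cP cls i s = Some (j, FOpen)"
        using 2 by (simp add: polF_def)
      then have "valF (Suc n) s = - cF j0 + (\<integral>x. valF n (s(j := Full (snd x))) \<partial>D j0)"
        using j same_class[OF j(1,2)] by simp
      also have "\<dots> = - cF j0 + (\<integral>x. inspF m (max b (snd x)) \<partial>D j0)"
        using polF_after_F_open[OF Suc.IH Suc.prems(1) j m] Suc.prems(2) m by (simp add: b_def)
      also have "\<dots> = inspF (Suc m) b"
        using False continuation_all_good integrable_inspect_value[of UNIV] by simp
      finally show ?thesis
        using m b_def by simp
    qed
  qed
qed

lemma find_high_type_None:
  assumes sP: "sigP (D j0) (cF j0) (cP j0) = max_threshold" and "settled s"
  shows "find (\<lambda>j. cls j = i \<and> (\<exists>t. s j = Part t \<and> sigFc (D j) (cF j) t > sigP (D j) (cF j) (cP j))) [0..<N] = None"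
  unfolding find_None_iff
proof (intro notI, elim exE conjE)
  fix j t
  assume j: "j \<in> set [0..<N]" "cls j = i" and t: "s j = Part t"
    and high: "sigP (D j) (cF j) (cP j) < sigFc (D j) (cF j) t"
  have "\<not> good t"
    using assms(2) j t unfolding settled_def by simp
  then show False
    using high sP same_class[of j] j by simp
qed

lemma find_high_type_after_P_open:
  assumes sP: "sigP (D j0) (cF j0) (cP j0) = max_threshold" and "settled s"
    and j: "j < N" "cls j = i" and "good t"
  shows "find (\<lambda>l. cls l = i \<and> (\<exists>t'. (s(j := Part t)) l = Part t'
            \<and> sigFc (D l) (cF l) t' > sigP (D l) (cF l) (cP l))) [0..<N] = Some j"
proof (cases rule: find_upt_cases[of "\<lambda>l. cls l = i \<and> (\<exists>t'. (s(j := Part t)) l = Part t'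
            \<and> sigFc (D l) (cF l) t' > sigP (D l) (cF l) (cP l))" N])
  case 1
  from 1(2)[rule_format, OF j(1)] show ?thesis
    using \<open>good t\<close> j sP same_class[OF j] by simp
next
  case (2 l)
  have "l = j"
  proof (rule ccontr)
    assume "l \<noteq> j"
    then obtain t' where "cls l = i" "s l = Part t'" "sigP (D l) (cF l) (cP l) < sigFc (D l) (cF l) t'"
      using 2 by auto
    moreover have "\<not> good t'"
      using assms(2) \<open>l < N\<close> \<open>s l = Part t'\<close> unfolding settled_def by simp
    ultimately show False
      using sP same_class[of l] \<open>l < N\<close> by simp
  qed
  then show ?thesis
    using 2 by simp
qed

lemma polP_after_P_open:
  assumes sP: "sigP (D j0) (cF j0) (cP j0) = max_threshold"
    and IH: "\<And>k' s'. k' \<le> k \<Longrightarrow> settled s' \<Longrightarrow> 2 * closed_count s' \<le> k' \<Longrightarrow>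
               valP k' s' = inspP (closed_count s') (best N s')"
    and s: "settled s" and j: "j < N" "cls j = i" "s j = Closed" and m: "closed_count s = Suc m"
    and fuel: "2 * m < k" and below: "best N s < max_threshold"
  shows "valP k (s(j := Part t))
    = (if good t then - cF j0 + cond_exp (D j0) t (\<lambda>v. inspP m (max (best N s) v))
       else inspP m (best N s))"
proof (cases "good t")
  case True
  let ?s = "s(j := Part t)"
  note state = open_closed_box[OF s j m]
  obtain k' where k: "k = Suc k'"
    using fuel by (cases k) auto
  have "\<not> stop_rule N D cF cP ?s"
  proof
    assume "stop_rule N D cF cP ?s"
    then have "sigFc (D j) (cF j) t \<le> best N ?s"
      using j(1) spec[of _ j] unfolding stop_rule_def by fastforce
    then show False
      using True below same_class[OF j(1,2)] state(6) by simp
  qed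
  then have "polP N D cF cP cls i ?s = Some (j, FOpen)"
    using find_high_type_after_P_open[OF sP s j(1,2) True] by (simp add: polP_def)
  then have "valP k ?s = - cF j0 + cond_exp (D j0) t (\<lambda>v. valP k' (s(j := Full v)))"
    using j same_class[OF j(1,2)] k by simp
  also have "\<dots> = - cF j0 + cond_exp (D j0) t (\<lambda>v. inspP m (max (best N s) v))"
    using IH[OF _ state(1)] fuel k unfolding state(2,3) by simp
  finally show ?thesis
    using True by simp
next
  case False
  note state = open_closed_box[OF s j m]
  show ?thesis
    using IH[OF _ state(4)[OF False]] fuel False unfolding state(5,6) by simp
qed

lemma polP_value:
  assumes sP: "sigP (D j0) (cF j0) (cP j0) = max_threshold"
    and "settled s" and "2 * closed_count s \<le> n"
  shows "valP n s = inspP (closed_count s) (best N s)"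
  using assms(2,3)
proof (induction n arbitrary: s rule: less_induct)
  case (less n)
  define b where "b = best N s"
  note no_high = find_high_type_None[OF sP less.prems(1)]
  show ?case
  proof (cases rule: find_upt_cases[of "\<lambda>j. cls j = i \<and> s j = Closed" N])
    case 1
    then have "polP N D cF cP cls i s = None" and "closed_count s = 0"
      using closed_count_eq_0[of s] no_high by (simp_all add: polP_def)
    then show ?thesis
      by (simp add: polf_None)
  next
    case (2 j)
    then have j: "j < N" "cls j = i" "s j = Closed"
      by auto
    then obtain m where m: "closed_count s = Suc m"
      using closed_count_eq_0[of s] by (cases "closed_count s") auto
    show ?thesis
    proof (cases "max_threshold \<le> b")
      case True
      then have "polP N D cF cP cls i s = None"
        using stop_rule_if_settled[OF less.prems(1)] by (simp add: polP_def b_def)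
      moreover have "inspP (closed_count s) b = b"
        using True by (rule inspect_value_stop)
      ultimately show ?thesis
        by (simp add: polf_None b_def)
    next
      case False
      obtain n' where n: "n = Suc n'" and fuel: "2 * m < n'"
        using less.prems(2) m by (cases n) auto
      have IH: "valP k' s' = inspP (closed_count s') (best N s')"
        if "k' \<le> n'" "settled s'" "2 * closed_count s' \<le> k'" for k' s'
        using less.IH[of k' s'] that n by simp
      have "\<not> stop_rule N D cF cP s"
        using j False same_class[OF j(1,2)] sP unfolding stop_rule_def b_def by force
      then have "polP N D cF cP cls i s = Some (j, POpen)"
        using 2 no_high by (simp add: polP_def)
      then have "valP n s = - cP j0 + (\<integral>x. valP n' (s(j := Part (fst x))) \<partial>D j0)"
        using j same_class[OF j(1,2)] n by simp
      also have "\<dots> = inspP (Suc m) b"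
        using polP_after_P_open[OF sP IH less.prems(1) j m fuel] False
        by (simp add: continuation_def b_def)
      finally show ?thesis
        using m b_def by simp
    qed
  qed
qed

lemma polF_pol_value_ge:
  assumes sF: "sigF (D j0) (cF j0) = max_threshold"
  shows "reach_value max_threshold (measure (D j0) {x. max_threshold < snd x}) (card {j. j < N \<and> cls j = i}) 0
       \<le> pol_value N D cF cP (polF N D cF cP cls i)"
proof -
  interpret inspection "D j0" 0 "cF j0" max_threshold "\<lambda>_. True"
    using box_law.inspection_F_open[OF box_law[OF j0(1)] cF_pos[OF j0(1)]] sF by simp
  have "pol_value N D cF cP (polF N D cF cP cls i) = inspF (card {j. j < N \<and> cls j = i}) 0"
    unfolding pol_value_def using polF_value[OF sF settled_initial] closed_count_le[of "\<lambda>_. Closed"]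
    by (simp add: closed_count_initial best_def)
  moreover have "reach_value max_threshold success (card {j. j < N \<and> cls j = i}) 0
      \<le> inspF (card {j. j < N \<and> cls j = i}) 0"
    using inspect_value_bounds by blast
  ultimately show ?thesis
    by (simp add: success_def)
qed

lemma polP_pol_value_ge:
  assumes sP: "sigP (D j0) (cF j0) (cP j0) = max_threshold"
  shows "reach_value max_threshold (measure (D j0) {x. max_threshold < snd x \<and> good (fst x)})
         (card {j. j < N \<and> cls j = i}) 0
       \<le> pol_value N D cF cP (polP N D cF cP cls i)"
proof -
  interpret inspection "D j0" "cF j0" "cP j0" max_threshold good
    using box_law.inspection_P_open[OF box_law[OF j0(1)] cF_pos[OF j0(1)] cP_pos[OF j0(1)]] sP by simp
  have "pol_value N D cF cP (polP N D cF cP cls i) = inspP (card {j. j < N \<and> cls j = i}) 0"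
    unfolding pol_value_def using polP_value[OF sP settled_initial] closed_count_le[of "\<lambda>_. Closed"]
    by (simp add: closed_count_initial best_def)
  moreover have "reach_value max_threshold success (card {j. j < N \<and> cls j = i}) 0
      \<le> inspP (card {j. j < N \<and> cls j = i}) 0"
    using inspect_value_bounds by blast
  ultimately show ?thesis
    by (simp add: success_def)
qed


lemma polF_ratio_bound:
  assumes sF: "sigF (D j0) (cF j0) = max_threshold"
    and a: "0 < a" "a < real (card {j. j < N \<and> cls j = i})"
  shows "(1 - (1 - measure (D j0) {x. sigF (D j0) (cF j0) < snd x}) powr a) * opt_value N D cF cP
       \<le> pol_value N D cF cP (polF N D cF cP cls i)"
proof -
  interpret box_law "D j0"
    using box_law j0 by simp
  show ?thesis
    using ratio_bound[OF _ _ a opt_value_le_max_threshold polF_pol_value_ge[OF sF]] sF by simp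
qed

lemma polP_ratio_bound:
  assumes sP: "sigP (D j0) (cF j0) (cP j0) = max_threshold"
    and a: "0 < a" "a < real (card {j. j < N \<and> cls j = i})"
  shows "(1 - (1 - measure (D j0) {x. sigP (D j0) (cF j0) (cP j0) < snd x
                             \<and> sigP (D j0) (cF j0) (cP j0) < sigFc (D j0) (cF j0) (fst x)}
                 / measure (D j0) {x. sigP (D j0) (cF j0) (cP j0) < sigFc (D j0) (cF j0) (fst x)}
                 * measure (D j0) {x. sigP (D j0) (cF j0) (cP j0) < sigFc (D j0) (cF j0) (fst x)}) powr a)
          * opt_value N D cF cP
       \<le> pol_value N D cF cP (polP N D cF cP cls i)"
proof -
  interpret box_law "D j0"
    using box_law j0 by simp
  have "{x \<in> space (D j0). good (fst x)} \<in> sets (D j0)"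
    by measurable
  then have "measure (D j0) {x. max_threshold < snd x \<and> good (fst x)} / measure (D j0) {x. good (fst x)}
      * measure (D j0) {x. good (fst x)} = measure (D j0) {x. max_threshold < snd x \<and> good (fst x)}"
    by (intro measure_div_mult_cancel) (auto simp: space_eq)
  then show ?thesis
    using ratio_bound[OF _ _ a opt_value_le_max_threshold polP_pol_value_ge[OF sP]] sP by simp
qed
end

theorem mainTheorem5:
  fixes N K i j0 :: nat and \<theta> :: real
    and D :: "nat \<Rightarrow> ('t::finite \<times> real) measure"
    and cF cP :: "nat \<Rightarrow> real" and cls :: "nat \<Rightarrow> nat"
  assumes prob: "\<And>j. j < N \<Longrightarrow> prob_space (D j)"
    and sets: "\<And>j. j < N \<Longrightarrow> sets (D j) = sets (count_space UNIV \<Otimes>\<^sub>M borel)"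
    and nonneg: "\<And>j. j < N \<Longrightarrow> AE x in D j. snd x \<ge> 0"
    and integ: "\<And>j. j < N \<Longrightarrow> integrable (D j) snd"
    and cFpos: "\<And>j. j < N \<Longrightarrow> cF j > 0"
    and cPpos: "\<And>j. j < N \<Longrightarrow> cP j > 0"
    and cls_range: "\<And>j. j < N \<Longrightarrow> cls j < K"
    and cls_ident: "\<And>j j'. j < N \<Longrightarrow> j' < N \<Longrightarrow> cls j = cls j' \<Longrightarrow>
                      D j = D j' \<and> cF j = cF j' \<and> cP j = cP j'"
    and theta: "\<theta> > 0"
    and sizes: "\<And>k. k < K \<Longrightarrow> real (card {j. j < N \<and> cls j = k}) > \<theta> * real N"
    and i: "i < K" and j0: "j0 < N" "cls j0 = i"
    and attains: "max (sigF (D j0) (cF j0)) (sigP (D j0) (cF j0) (cP j0))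
                   = Max {max (sigF (D j) (cF j)) (sigP (D j) (cF j) (cP j)) | j. j < N}"
  shows
   "(let \<sigma>M = Max {max (sigF (D j) (cF j)) (sigP (D j) (cF j) (cP j)) | j. j < N};
         sF = sigF (D j0) (cF j0);
         sP = sigP (D j0) (cF j0) (cP j0);
         u = measure (D j0) {x. snd x > sF};
         q = measure (D j0) {x. sigFc (D j0) (cF j0) (fst x) > sP};
         p = measure (D j0) {x. snd x > sP \<and> sigFc (D j0) (cF j0) (fst x) > sP} / q;
         OPT = opt_value N D cF cP
     in (sF = \<sigma>M \<longrightarrow>
           pol_value N D cF cP (polF N D cF cP cls i) \<ge> (1 - (1 - u) powr (\<theta> * real N)) * OPT)
      \<and> (sP = \<sigma>M \<longrightarrow>
           pol_value N D cF cP (polP N D cF cP cls i) \<ge> (1 - (1 - p * q) powr (\<theta> * real N)) * OPT))"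
proof -
  have "box_law (D j)" if "j < N" for j
    using prob[OF that] sets[OF that] integ[OF that] by (simp add: box_law_def box_law_axioms_def)
  then interpret class_policy N D cF cP cls i j0
    using cFpos cPpos j0 cls_ident
    by (intro class_policy.intro pandora.intro class_policy_axioms.intro) blast+
  have "0 < real N"
    using j0 by simp
  then have "0 < \<theta> * real N" "\<theta> * real N < real (card {j. j < N \<and> cls j = i})"
    using theta sizes[OF i] by simp_all
  note ratio = polF_ratio_bound[OF _ this] polP_ratio_bound[OF _ this]
  show ?thesis
    unfolding Let_def max_threshold_def[symmetric] using ratio by blast
qed

end
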